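(* Let $\mathcal C$ be a quantum channel on a finite-dimensional system $A$, let $v\ge1$, and let $\widetilde{\mathcal C}$ be a vacuum extension of $\mathcal C$ with a $v$-dimensional vacuum sector. Let $\{\widetilde C_i=C_i\oplus C_{\mathrm{Vac},i}\}_{i=1}^r$ be a Kraus representation of $\widetilde{\mathcal C}$ consisting of linearly independent operators, and let $z$ be the number of indices $i$ with $C_i=0$. If $\widetilde{\mathcal C}$ is an extreme point of the convex set of vacuum extensions of $\mathcal C$ with $v$-dimensional vacuum sector, then $z\le\sqrt{v^2+1}-1$. In particular, if $v=1$, none of the operators $C_i$ is zero.
   Context: $\mathrm{Vac}$ is a $v$-dimensional sector orthogonal to $A$. A vacuum extension of $\mathcal C$ is a channel $\widetilde{\mathcal C}$ on $A\oplus\mathrm{Vac}$ such that (i) states supported in $A$ are mapped to states supported in $A$ and states supported in $\mathrm{Vac}$ are mapped to states supported in $\mathrm{Vac}$ (No Leakage Condition), and (ii) its restriction to $A$ (the channel with Kraus operators $P_A\widetilde C_iP_A$) is $\mathcal C$. Such extensions form a convex set; its Kraus operators have block form $C_i\oplus C_{\mathrm{Vac},i}$ with $C_i$ on $\mathcal H_A$ and $C_{\mathrm{Vac},i}$ on $\mathcal H_{\mathrm{Vac}}$. *)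

theory Defs
  imports "Jordan_Normal_Form.Matrix"
begin

text \<open>Finite-dimensional quantum systems are modelled by complex square matrices of a
fixed size; a map on operators is a function on complex matrices, only its values
on matrices of the relevant size matter.\<close>

definition adj :: "complex mat \<Rightarrow> complex mat" where
  "adj K = mat (dim_col K) (dim_row K) (\<lambda>(i,j). cnj (K $$ (j,i)))"

definition tr :: "complex mat \<Rightarrow> complex" where
  "tr M = (\<Sum>i<dim_row M. M $$ (i,i))"

definition psd :: "nat \<Rightarrow> complex mat \<Rightarrow> bool" where
  "psd n M \<longleftrightarrow> M \<in> carrier_mat n n \<and> adj M = M \<and>
     (\<forall>x \<in> carrier_vec n.
        Im (\<Sum>i<n. \<Sum>j<n. cnj (x $ i) * M $$ (i,j) * x $ j) = 0 \<and>
        Re (\<Sum>i<n. \<Sum>j<n. cnj (x $ i) * M $$ (i,j) * x $ j) \<ge> 0)"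

definition density :: "nat \<Rightarrow> complex mat \<Rightarrow> bool" where
  "density n \<rho> \<longleftrightarrow> psd n \<rho> \<and> tr \<rho> = 1"

definition msum :: "nat \<Rightarrow> complex mat list \<Rightarrow> complex mat" where
  "msum n Ms = foldr (+) Ms (0\<^sub>m n n)"

definition kraus_rep :: "nat \<Rightarrow> complex mat list \<Rightarrow> (complex mat \<Rightarrow> complex mat) \<Rightarrow> bool" where
  "kraus_rep n Ks E \<longleftrightarrow>
     (\<forall>K \<in> set Ks. K \<in> carrier_mat n n) \<and>
     msum n (map (\<lambda>K. adj K * K) Ks) = 1\<^sub>m n \<and>
     (\<forall>\<rho> \<in> carrier_mat n n. E \<rho> = msum n (map (\<lambda>K. K * \<rho> * adj K) Ks))"

definition is_channel :: "nat \<Rightarrow> (complex mat \<Rightarrow> complex mat) \<Rightarrow> bool" where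
  "is_channel n E \<longleftrightarrow> (\<exists>Ks. kraus_rep n Ks E)"

text \<open>The total space is A \<oplus> Vac of dimension d + v, where the first d basis vectors
span A and the last v span Vac.\<close>
definition proj_A :: "nat \<Rightarrow> nat \<Rightarrow> complex mat" where
  "proj_A d v = mat (d+v) (d+v) (\<lambda>(i,j). if i = j \<and> i < d then 1 else 0)"

definition proj_Vac :: "nat \<Rightarrow> nat \<Rightarrow> complex mat" where
  "proj_Vac d v = mat (d+v) (d+v) (\<lambda>(i,j). if i = j \<and> d \<le> i then 1 else 0)"

text \<open>The A-block P_A K P_A of an operator on A \<oplus> Vac, viewed as an operator on H_A.\<close>
definition blockA :: "nat \<Rightarrow> complex mat \<Rightarrow> complex mat" where
  "blockA d K = mat d d (\<lambda>(i,j). K $$ (i,j))"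

definition no_leakage :: "nat \<Rightarrow> nat \<Rightarrow> (complex mat \<Rightarrow> complex mat) \<Rightarrow> bool" where
  "no_leakage d v E \<longleftrightarrow>
     (\<forall>\<rho>. density (d+v) \<rho> \<and> proj_A d v * \<rho> * proj_A d v = \<rho> \<longrightarrow>
            proj_A d v * E \<rho> * proj_A d v = E \<rho>) \<and>
     (\<forall>\<rho>. density (d+v) \<rho> \<and> proj_Vac d v * \<rho> * proj_Vac d v = \<rho> \<longrightarrow>
            proj_Vac d v * E \<rho> * proj_Vac d v = E \<rho>)"

definition vacuum_extension ::
  "nat \<Rightarrow> nat \<Rightarrow> (complex mat \<Rightarrow> complex mat) \<Rightarrow> (complex mat \<Rightarrow> complex mat) \<Rightarrow> bool" where
  "vacuum_extension d v C E \<longleftrightarrow>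
     is_channel (d+v) E \<and> no_leakage d v E \<and>
     (\<exists>Ks. kraus_rep (d+v) Ks E \<and>
        (\<forall>\<rho> \<in> carrier_mat d d.
           C \<rho> = msum d (map (\<lambda>K. blockA d K * \<rho> * adj (blockA d K)) Ks)))"

text \<open>Extreme point of a convex set of maps on n x n matrices (maps identified when they
agree on all n x n matrices).\<close>
definition extreme_map :: "nat \<Rightarrow> (complex mat \<Rightarrow> complex mat) set \<Rightarrow> (complex mat \<Rightarrow> complex mat) \<Rightarrow> bool" where
  "extreme_map n S E \<longleftrightarrow> E \<in> S \<and>
     (\<forall>E1 E2 (t::real). E1 \<in> S \<and> E2 \<in> S \<and> 0 < t \<and> t < 1 \<and>
        (\<forall>\<rho> \<in> carrier_mat n n.
           E \<rho> = complex_of_real t \<cdot>\<^sub>m E1 \<rho> + complex_of_real (1 - t) \<cdot>\<^sub>m E2 \<rho>) \<longrightarrow>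
        (\<forall>\<rho> \<in> carrier_mat n n. E1 \<rho> = E \<rho> \<and> E2 \<rho> = E \<rho>))"

definition lin_indep_mats :: "nat \<Rightarrow> complex mat list \<Rightarrow> bool" where
  "lin_indep_mats n Ks \<longleftrightarrow>
     (\<forall>c :: nat \<Rightarrow> complex.
        msum n (map (\<lambda>i. c i \<cdot>\<^sub>m Ks ! i) [0..<length Ks]) = 0\<^sub>m n n \<longrightarrow>
        (\<forall>i < length Ks. c i = 0))"

end

theory Submission
  imports Defs "Jordan_Normal_Form.Determinant"
begin

text \<open>No leakage forces every Kraus operator into block form \<open>K\<^sub>i = C\<^sub>i \<oplus> V\<^sub>i\<close>; let \<open>Z\<close> be
  the set of indices with \<open>C\<^sub>i = 0\<close>. For a Hermitian coefficient matrix \<open>X\<close> that only couples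
  pairs \<open>(i,j)\<close> with \<open>i \<in> Z\<close> or \<open>j \<in> Z\<close>, the maps \<open>\<rho> \<mapsto> E \<rho> \<plusminus> (\<Sum>i j. X i j \<cdot> K\<^sub>i \<rho> K\<^sub>j\<^sup>*)\<close>
  still leak nothing and still restrict to \<open>C\<close> on \<open>A\<close>. If moreover \<open>\<Sum>i j. X i j \<cdot> K\<^sub>j\<^sup>* K\<^sub>i\<close>
  vanishes on the vacuum block and \<open>X\<close> is small, \<open>I \<plusminus> X\<close> are diagonally dominant, hence Gram
  matrices, and the two maps are vacuum extensions of \<open>C\<close> with \<open>E\<close> as their midpoint.
  Extremality and linear independence of the \<open>K\<^sub>i\<close> then force \<open>X = 0\<close>.

  Some \<open>j\<^sub>0 \<notin> Z\<close> exists because \<open>E\<close> is trace preserving on \<open>A \<noteq> 0\<close>. The pairs in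
  \<open>(Z \<union> {j\<^sub>0})\<^sup>2\<close> other than \<open>(j\<^sub>0,j\<^sub>0)\<close> give \<open>(|Z| + 1)\<^sup>2 - 1\<close> unknowns against \<open>v\<^sup>2\<close>
  linear equations for the vacuum block, so a nonzero admissible \<open>X\<close> exists unless
  \<open>(|Z| + 1)\<^sup>2 - 1 \<le> v\<^sup>2\<close>, i.e. \<open>|Z| \<le> sqrt (v\<^sup>2 + 1) - 1\<close>.\<close>

lemma sum_mult_cnj_eq_0_iff:
  fixes z :: "'a \<Rightarrow> complex"
  assumes "finite S"
  shows "(\<Sum>i\<in>S. z i * cnj (z i)) = 0 \<longleftrightarrow> (\<forall>i\<in>S. z i = 0)"
proof -
  have "(\<Sum>i\<in>S. z i * cnj (z i)) = complex_of_real (\<Sum>i\<in>S. (cmod (z i))\<^sup>2)"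
    by (simp only: complex_norm_square of_real_sum)
  then have "(\<Sum>i\<in>S. z i * cnj (z i)) = 0 \<longleftrightarrow> (\<Sum>i\<in>S. (cmod (z i))\<^sup>2) = 0"
    by (simp only: of_real_eq_0_iff)
  then show ?thesis
    using assms by (simp add: sum_nonneg_eq_0_iff)
qed

lemma sum_sum_if_eq:
  assumes "finite A" "finite B" "a \<in> A" "b \<in> B"
  shows "(\<Sum>x\<in>A. \<Sum>y\<in>B. if x = a \<and> y = b then z else 0) = z"
proof -
  have "(\<Sum>x\<in>A. \<Sum>y\<in>B. if x = a \<and> y = b then z else 0)
      = (\<Sum>x\<in>A. if x = a then (\<Sum>y\<in>B. if y = b then z else 0) else 0)"
    by (intro sum.cong) auto
  then show ?thesis
    using assms by simp
qed

lemma cnj_of_bool [simp]: "cnj (of_bool P) = of_bool P"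
  by (cases P) simp_all

lemma sum_of_bool_eq_mult:
  fixes n i :: nat
  shows "(\<Sum>j<n. of_bool (i = j) * f j) = (if i < n then f i else (0 :: 'a :: semiring_1))"
proof -
  have "(\<Sum>j<n. of_bool (i = j) * f j) = (\<Sum>j<n. if j = i then f j else 0)"
    by (intro sum.cong) auto
  then show ?thesis
    by simp
qed

lemma sum_rotate3: "(\<Sum>x\<in>A. \<Sum>i\<in>B. \<Sum>j\<in>C. f x i j) = (\<Sum>i\<in>B. \<Sum>j\<in>C. \<Sum>x\<in>A. f x i j)"
proof -
  have "(\<Sum>x\<in>A. \<Sum>i\<in>B. \<Sum>j\<in>C. f x i j) = (\<Sum>i\<in>B. \<Sum>x\<in>A. \<Sum>j\<in>C. f x i j)"
    by (rule sum.swap)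
  also have "\<dots> = (\<Sum>i\<in>B. \<Sum>j\<in>C. \<Sum>x\<in>A. f x i j)"
    by (rule sum.cong[OF refl], rule sum.swap)
  finally show ?thesis .
qed

lemma msum_carrier: "\<forall>M\<in>set Ms. M \<in> carrier_mat n n \<Longrightarrow> msum n Ms \<in> carrier_mat n n"
  by (induction Ms) (auto simp: msum_def)

lemma index_msum:
  assumes "\<forall>M\<in>set Ms. M \<in> carrier_mat n n" "a < n" "b < n"
  shows "msum n Ms $$ (a,b) = (\<Sum>k<length Ms. Ms ! k $$ (a,b))"
  using assms
proof (induction Ms)
  case (Cons M Ms)
  have "msum n (M # Ms) $$ (a,b) = M $$ (a,b) + msum n Ms $$ (a,b)"
    using Cons.prems msum_carrier[of Ms n] by (simp add: msum_def)
  then show ?case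
    using Cons by (simp add: sum.lessThan_Suc_shift del: sum.lessThan_Suc)
qed (simp add: msum_def)

lemma index_msum_map:
  assumes "\<And>x. x \<in> set xs \<Longrightarrow> f x \<in> carrier_mat n n" "a < n" "b < n"
  shows "msum n (map f xs) $$ (a,b) = (\<Sum>k<length xs. f (xs ! k) $$ (a,b))"
  using assms by (subst index_msum) auto

lemma adj_carrier [simp]: "K \<in> carrier_mat n m \<Longrightarrow> adj K \<in> carrier_mat m n"
  by (simp add: adj_def)

lemma adj_mult_self_carrier: "K \<in> carrier_mat m n \<Longrightarrow> adj K * K \<in> carrier_mat n n"
  by (auto intro!: mult_carrier_mat)

lemma sandwich_carrier:
  "K \<in> carrier_mat n m \<Longrightarrow> \<rho> \<in> carrier_mat m m \<Longrightarrow> K' \<in> carrier_mat n' m \<Longrightarrow>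
    K * \<rho> * adj K' \<in> carrier_mat n n'"
  by (auto intro!: mult_carrier_mat)

lemma index_sandwich:
  assumes "K \<in> carrier_mat n m" "\<rho> \<in> carrier_mat m m" "K' \<in> carrier_mat n' m" "a < n" "b < n'"
  shows "(K * \<rho> * adj K') $$ (a,b) = (\<Sum>c<m. \<Sum>e<m. K $$ (a,c) * \<rho> $$ (c,e) * cnj (K' $$ (b,e)))"
proof -
  have "(K * \<rho> * adj K') $$ (a,b) = (\<Sum>e<m. (\<Sum>c<m. K $$ (a,c) * \<rho> $$ (c,e)) * cnj (K' $$ (b,e)))"
    using assms by (simp add: scalar_prod_def adj_def atLeast0LessThan)
  also have "\<dots> = (\<Sum>e<m. \<Sum>c<m. K $$ (a,c) * \<rho> $$ (c,e) * cnj (K' $$ (b,e)))"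
    by (simp add: sum_distrib_right)
  also have "\<dots> = (\<Sum>c<m. \<Sum>e<m. K $$ (a,c) * \<rho> $$ (c,e) * cnj (K' $$ (b,e)))"
    by (rule sum.swap)
  finally show ?thesis .
qed

lemma index_adj_mult:
  assumes "K \<in> carrier_mat m n" "K' \<in> carrier_mat m n'" "a < n" "b < n'"
  shows "(adj K * K') $$ (a,b) = (\<Sum>c<m. cnj (K $$ (c,a)) * K' $$ (c,b))"
  using assms by (simp add: scalar_prod_def adj_def atLeast0LessThan)

definition mat_unit :: "nat \<Rightarrow> nat \<Rightarrow> nat \<Rightarrow> 'a :: zero_neq_one mat" where
  "mat_unit n c e = mat n n (\<lambda>(x,y). if x = c \<and> y = e then 1 else 0)"

lemma mat_unit_carrier [simp]: "mat_unit n c e \<in> carrier_mat n n"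
  by (simp add: mat_unit_def)

lemma index_sandwich_mat_unit:
  assumes "K \<in> carrier_mat n m" "K' \<in> carrier_mat n' m" "c < m" "e < m" "a < n" "b < n'"
  shows "(K * mat_unit m c e * adj K') $$ (a,b) = K $$ (a,c) * cnj (K' $$ (b,e))"
proof -
  have "(K * mat_unit m c e * adj K') $$ (a,b)
      = (\<Sum>x<m. \<Sum>y<m. if x = c \<and> y = e then K $$ (a,c) * cnj (K' $$ (b,e)) else 0)"
    using assms by (subst index_sandwich) (auto simp: mat_unit_def intro!: sum.cong)
  then show ?thesis
    using assms by (simp add: sum_sum_if_eq)
qed

lemma density_mat_unit:
  assumes "c < n"
  shows "density n (mat_unit n c c)"
  unfolding density_def psd_def
proof (intro conjI ballI)
  fix x :: "complex vec"
  have "(\<Sum>i<n. \<Sum>j<n. cnj (x $ i) * mat_unit n c c $$ (i,j) * x $ j)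
      = (\<Sum>i<n. \<Sum>j<n. if i = c \<and> j = c then x $ c * cnj (x $ c) else 0)"
    by (intro sum.cong) (auto simp: mat_unit_def)
  also have "\<dots> = complex_of_real ((Re (x $ c))\<^sup>2 + (Im (x $ c))\<^sup>2)"
    using assms by (simp only: sum_sum_if_eq finite_lessThan lessThan_iff complex_mult_cnj)
  finally have "(\<Sum>i<n. \<Sum>j<n. cnj (x $ i) * mat_unit n c c $$ (i,j) * x $ j)
      = complex_of_real ((Re (x $ c))\<^sup>2 + (Im (x $ c))\<^sup>2)" .
  then show "Im (\<Sum>i<n. \<Sum>j<n. cnj (x $ i) * mat_unit n c c $$ (i,j) * x $ j) = 0"
    and "Re (\<Sum>i<n. \<Sum>j<n. cnj (x $ i) * mat_unit n c c $$ (i,j) * x $ j) \<ge> 0"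
    by simp_all
next
  show "adj (mat_unit n c c) = mat_unit n c c"
    by (rule eq_matI) (auto simp: adj_def mat_unit_def)
  show "tr (mat_unit n c c) = 1"
    using assms by (simp add: tr_def mat_unit_def)
qed simp

lemma kraus_rep_nth_carrier:
  "kraus_rep n Ks E \<Longrightarrow> i < length Ks \<Longrightarrow> Ks ! i \<in> carrier_mat n n"
  by (simp add: kraus_rep_def)

lemma kraus_rep_carrier:
  "kraus_rep n Ks E \<Longrightarrow> \<rho> \<in> carrier_mat n n \<Longrightarrow> E \<rho> \<in> carrier_mat n n"
  by (auto simp: kraus_rep_def intro!: msum_carrier sandwich_carrier)

lemma index_kraus_rep:
  assumes "kraus_rep n Ks E" "\<rho> \<in> carrier_mat n n" "a < n" "b < n"
  shows "E \<rho> $$ (a,b) = (\<Sum>i<length Ks. (Ks ! i * \<rho> * adj (Ks ! i)) $$ (a,b))"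
proof -
  have "E \<rho> = msum n (map (\<lambda>K. K * \<rho> * adj K) Ks)" "\<forall>K\<in>set Ks. K \<in> carrier_mat n n"
    using assms by (auto simp: kraus_rep_def)
  then show ?thesis
    using assms by (auto intro!: index_msum_map sandwich_carrier)
qed

lemma index_kraus_rep_tp:
  assumes "kraus_rep n Ks E" "a < n" "b < n"
  shows "(\<Sum>i<length Ks. (adj (Ks ! i) * Ks ! i) $$ (a,b)) = of_bool (a = b)"
proof -
  have "(\<Sum>i<length Ks. (adj (Ks ! i) * Ks ! i) $$ (a,b)) = msum n (map (\<lambda>K. adj K * K) Ks) $$ (a,b)"
    by (rule index_msum_map[symmetric]) (use assms in \<open>auto simp: kraus_rep_def intro!: mult_carrier_mat\<close>)
  also have "\<dots> = 1\<^sub>m n $$ (a,b)"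
    using assms by (simp add: kraus_rep_def)
  also have "\<dots> = of_bool (a = b)"
    using assms by simp
  finally show ?thesis .
qed

definition kraus_map :: "nat \<Rightarrow> complex mat list \<Rightarrow> complex mat \<Rightarrow> complex mat" where
  "kraus_map n Ms \<rho> = msum n (map (\<lambda>K. K * \<rho> * adj K) Ms)"

definition mat_lincomb :: "nat \<Rightarrow> complex mat list \<Rightarrow> (nat \<Rightarrow> complex) \<Rightarrow> complex mat" where
  "mat_lincomb n Ks g = mat n n (\<lambda>(a,c). \<Sum>i<length Ks. g i * Ks ! i $$ (a,c))"

lemma mat_lincomb_carrier [simp]: "mat_lincomb n Ks g \<in> carrier_mat n n"
  by (simp add: mat_lincomb_def)

lemma index_sandwich_mat_lincomb:
  assumes Ks: "\<forall>K\<in>set Ks. K \<in> carrier_mat n n" and \<rho>: "\<rho> \<in> carrier_mat n n" and "a < n" "b < n"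
  shows "(mat_lincomb n Ks g * \<rho> * adj (mat_lincomb n Ks g)) $$ (a,b)
    = (\<Sum>i<length Ks. \<Sum>j<length Ks. g i * cnj (g j) * (Ks ! i * \<rho> * adj (Ks ! j)) $$ (a,b))"
proof -
  let ?r = "length Ks"
  let ?T = "\<lambda>i j c e. Ks ! i $$ (a,c) * \<rho> $$ (c,e) * cnj (Ks ! j $$ (b,e))"
  have "(mat_lincomb n Ks g * \<rho> * adj (mat_lincomb n Ks g)) $$ (a,b)
      = (\<Sum>c<n. \<Sum>e<n. (\<Sum>i<?r. g i * Ks ! i $$ (a,c)) * \<rho> $$ (c,e) * cnj (\<Sum>j<?r. g j * Ks ! j $$ (b,e)))"
    unfolding index_sandwich[OF mat_lincomb_carrier \<rho> mat_lincomb_carrier assms(3,4)]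
    using assms by (simp add: mat_lincomb_def)
  also have "\<dots> = (\<Sum>c<n. \<Sum>e<n. \<Sum>i<?r. \<Sum>j<?r. g i * cnj (g j) * ?T i j c e)"
    by (simp add: cnj_sum sum_distrib_left sum_distrib_right mult_ac)
  also have "\<dots> = (\<Sum>c<n. \<Sum>i<?r. \<Sum>j<?r. \<Sum>e<n. g i * cnj (g j) * ?T i j c e)"
    by (rule sum.cong[OF refl], rule sum_rotate3)
  also have "\<dots> = (\<Sum>i<?r. \<Sum>j<?r. \<Sum>c<n. \<Sum>e<n. g i * cnj (g j) * ?T i j c e)"
    by (rule sum_rotate3)
  also have "\<dots> = (\<Sum>i<?r. \<Sum>j<?r. g i * cnj (g j) * (Ks ! i * \<rho> * adj (Ks ! j)) $$ (a,b))"
    using Ks by (simp add: index_sandwich[OF _ \<rho> _ assms(3,4)] sum_distrib_left)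
  finally show ?thesis .
qed

lemma index_adj_mult_mat_lincomb:
  assumes Ks: "\<forall>K\<in>set Ks. K \<in> carrier_mat n n" and "a < n" "b < n"
  shows "(adj (mat_lincomb n Ks g) * mat_lincomb n Ks g) $$ (a,b)
    = (\<Sum>i<length Ks. \<Sum>j<length Ks. cnj (g i) * g j * (adj (Ks ! i) * Ks ! j) $$ (a,b))"
proof -
  let ?r = "length Ks"
  let ?T = "\<lambda>i j c. cnj (Ks ! i $$ (c,a)) * Ks ! j $$ (c,b)"
  have "(adj (mat_lincomb n Ks g) * mat_lincomb n Ks g) $$ (a,b)
      = (\<Sum>c<n. cnj (\<Sum>i<?r. g i * Ks ! i $$ (c,a)) * (\<Sum>j<?r. g j * Ks ! j $$ (c,b)))"
    unfolding index_adj_mult[OF mat_lincomb_carrier mat_lincomb_carrier assms(2,3)]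
    using assms by (simp add: mat_lincomb_def)
  also have "\<dots> = (\<Sum>c<n. \<Sum>i<?r. \<Sum>j<?r. cnj (g i) * g j * ?T i j c)"
    by (simp add: cnj_sum sum_distrib_left sum_distrib_right mult_ac)
  also have "\<dots> = (\<Sum>i<?r. \<Sum>j<?r. \<Sum>c<n. cnj (g i) * g j * ?T i j c)"
    by (rule sum_rotate3)
  also have "\<dots> = (\<Sum>i<?r. \<Sum>j<?r. cnj (g i) * g j * (adj (Ks ! i) * Ks ! j) $$ (a,b))"
  proof (intro sum.cong refl)
    fix i j assume "i \<in> {..<?r}" "j \<in> {..<?r}"
    then have "Ks ! i \<in> carrier_mat n n" "Ks ! j \<in> carrier_mat n n"
      using Ks by auto
    then show "(\<Sum>c<n. cnj (g i) * g j * ?T i j c) = cnj (g i) * g j * (adj (Ks ! i) * Ks ! j) $$ (a,b)"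
      using index_adj_mult[of "Ks ! i" n n "Ks ! j" n a b] assms by (simp add: sum_distrib_left)
  qed
  finally show ?thesis .
qed

lemma index_kraus_map_mat_lincomb:
  assumes "\<forall>K\<in>set Ks. K \<in> carrier_mat n n" "\<rho> \<in> carrier_mat n n" "a < n" "b < n"
  shows "kraus_map n (map (\<lambda>k. mat_lincomb n Ks (g k)) [0..<L]) \<rho> $$ (a,b)
    = (\<Sum>i<length Ks. \<Sum>j<length Ks.
         (\<Sum>k<L. g k i * cnj (g k j)) * (Ks ! i * \<rho> * adj (Ks ! j)) $$ (a,b))"
proof -
  have "kraus_map n (map (\<lambda>k. mat_lincomb n Ks (g k)) [0..<L]) \<rho> $$ (a,b)
      = (\<Sum>k<L. \<Sum>i<length Ks. \<Sum>j<length Ks. g k i * cnj (g k j) * (Ks ! i * \<rho> * adj (Ks ! j)) $$ (a,b))"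
    unfolding kraus_map_def map_map
    by (subst index_msum_map) (use assms in \<open>auto simp: index_sandwich_mat_lincomb intro!: sandwich_carrier\<close>)
  also have "\<dots> = (\<Sum>i<length Ks. \<Sum>j<length Ks. \<Sum>k<L. g k i * cnj (g k j) * (Ks ! i * \<rho> * adj (Ks ! j)) $$ (a,b))"
    by (rule sum_rotate3)
  finally show ?thesis
    by (simp add: sum_distrib_right)
qed

lemma index_msum_adj_mult_mat_lincomb:
  assumes "\<forall>K\<in>set Ks. K \<in> carrier_mat n n" "a < n" "b < n"
  shows "msum n (map (\<lambda>M. adj M * M) (map (\<lambda>k. mat_lincomb n Ks (g k)) [0..<L])) $$ (a,b)
    = (\<Sum>i<length Ks. \<Sum>j<length Ks.
         cnj (\<Sum>k<L. g k i * cnj (g k j)) * (adj (Ks ! i) * Ks ! j) $$ (a,b))"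
proof -
  have "msum n (map (\<lambda>M. adj M * M) (map (\<lambda>k. mat_lincomb n Ks (g k)) [0..<L])) $$ (a,b)
      = (\<Sum>k<L. \<Sum>i<length Ks. \<Sum>j<length Ks. cnj (g k i) * g k j * (adj (Ks ! i) * Ks ! j) $$ (a,b))"
    unfolding map_map
    by (subst index_msum_map) (use assms in \<open>auto simp: index_adj_mult_mat_lincomb intro!: mult_carrier_mat\<close>)
  also have "\<dots> = (\<Sum>i<length Ks. \<Sum>j<length Ks. \<Sum>k<L. cnj (g k i) * g k j * (adj (Ks ! i) * Ks ! j) $$ (a,b))"
    by (rule sum_rotate3)
  finally show ?thesis
    by (simp add: sum_distrib_right cnj_sum mult.commute)
qed

lemma lin_indep_mats_coeff_zero:
  assumes indep: "lin_indep_mats n Ks" and Ks: "\<forall>K\<in>set Ks. K \<in> carrier_mat n n"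
    and zero: "\<And>a c. a < n \<Longrightarrow> c < n \<Longrightarrow> (\<Sum>i<length Ks. w i * Ks ! i $$ (a,c)) = 0"
    and i: "i < length Ks"
  shows "w i = 0"
proof -
  let ?M = "msum n (map (\<lambda>i. w i \<cdot>\<^sub>m Ks ! i) [0..<length Ks])"
  have Ksi: "Ks ! k \<in> carrier_mat n n" "dim_row (Ks ! k) = n" "dim_col (Ks ! k) = n"
    if "k < length Ks" for k
    using Ks that by (metis nth_mem carrier_matD)+
  have M: "?M \<in> carrier_mat n n"
    using Ksi by (intro msum_carrier) auto
  have "?M $$ (a,c) = (\<Sum>k<length Ks. w k * Ks ! k $$ (a,c))" if "a < n" "c < n" for a c
    using Ksi that by (subst index_msum_map) (auto intro!: sum.cong)
  then have "?M = 0\<^sub>m n n"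
    using zero M by (intro eq_matI) auto
  then show ?thesis
    using indep i by (simp add: lin_indep_mats_def)
qed

lemma lin_indep_mats_sandwich_coeffs_zero:
  assumes indep: "lin_indep_mats n Ks" and Ks: "\<forall>K\<in>set Ks. K \<in> carrier_mat n n"
    and zero: "\<And>\<rho> a b. \<rho> \<in> carrier_mat n n \<Longrightarrow> a < n \<Longrightarrow> b < n \<Longrightarrow>
      (\<Sum>i<length Ks. \<Sum>j<length Ks. X i j * (Ks ! i * \<rho> * adj (Ks ! j)) $$ (a,b)) = 0"
    and ij: "i < length Ks" "j < length Ks"
  shows "X i j = 0"
proof -
  have Ksi: "Ks ! k \<in> carrier_mat n n" if "k < length Ks" for k
    using Ks that by simp
  have row_zero: "(\<Sum>j<length Ks. X i j * cnj (Ks ! j $$ (b,e))) = 0"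
    if "i < length Ks" "b < n" "e < n" for i b e
  proof (rule lin_indep_mats_coeff_zero[OF indep Ks _ that(1)])
    fix a c assume ac: "a < n" "c < n"
    have "(\<Sum>i<length Ks. \<Sum>j<length Ks. X i j * (Ks ! i * mat_unit n c e * adj (Ks ! j)) $$ (a,b)) = 0"
      using zero ac that by simp
    moreover have "(Ks ! i * mat_unit n c e * adj (Ks ! j)) $$ (a,b) = Ks ! i $$ (a,c) * cnj (Ks ! j $$ (b,e))"
      if "i < length Ks" "j < length Ks" for i j
      using Ksi that ac \<open>b < n\<close> \<open>e < n\<close> by (intro index_sandwich_mat_unit) auto
    ultimately show "(\<Sum>i<length Ks. (\<Sum>j<length Ks. X i j * cnj (Ks ! j $$ (b,e))) * Ks ! i $$ (a,c)) = 0"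
      by (simp add: sum_distrib_left sum_distrib_right mult_ac)
  qed
  have "cnj (X i j) = 0"
  proof (rule lin_indep_mats_coeff_zero[OF indep Ks _ ij(2)])
    fix b e assume "b < n" "e < n"
    have "(\<Sum>j<length Ks. cnj (X i j) * Ks ! j $$ (b,e)) = cnj (\<Sum>j<length Ks. X i j * cnj (Ks ! j $$ (b,e)))"
      by (simp add: cnj_sum)
    then show "(\<Sum>j<length Ks. cnj (X i j) * Ks ! j $$ (b,e)) = 0"
      using row_zero[OF ij(1) \<open>b < n\<close> \<open>e < n\<close>] by simp
  qed
  then show ?thesis
    by simp
qed

section \<open>Supports and leakage\<close>

definition supported_on :: "(nat \<Rightarrow> bool) \<Rightarrow> 'a :: zero mat \<Rightarrow> bool" where
  "supported_on P M \<longleftrightarrow> (\<forall>a<dim_row M. \<forall>b<dim_col M. M $$ (a,b) \<noteq> 0 \<longrightarrow> P a \<and> P b)"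

definition coord_proj :: "nat \<Rightarrow> (nat \<Rightarrow> bool) \<Rightarrow> 'a :: zero_neq_one mat" where
  "coord_proj n P = mat n n (\<lambda>(i,j). if i = j \<and> P i then 1 else 0)"

lemma dim_coord_proj [simp]:
  "dim_row (coord_proj n P) = n" "dim_col (coord_proj n P) = n"
  by (simp_all add: coord_proj_def)

lemma coord_proj_carrier [simp]: "coord_proj n P \<in> carrier_mat n n"
  by (simp add: carrier_matI)

lemma proj_A_eq_coord_proj: "proj_A d v = coord_proj (d+v) (\<lambda>i. i < d)"
  by (simp add: proj_A_def coord_proj_def)

lemma proj_Vac_eq_coord_proj: "proj_Vac d v = coord_proj (d+v) (\<lambda>i. d \<le> i)"
  by (simp add: proj_Vac_def coord_proj_def)

lemma index_coord_proj_mult: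
  fixes M :: "'a :: semiring_1 mat"
  assumes "M \<in> carrier_mat n m" "a < n" "b < m"
  shows "(coord_proj n P * M) $$ (a,b) = (if P a then M $$ (a,b) else 0)"
proof -
  have "(coord_proj n P * M) $$ (a,b) = (\<Sum>c<n. (if a = c \<and> P a then 1 else 0) * M $$ (c,b))"
    using assms by (simp add: coord_proj_def scalar_prod_def atLeast0LessThan)
  also have "\<dots> = (\<Sum>c<n. if c = a then (if P a then M $$ (a,b) else 0) else 0)"
    by (intro sum.cong) auto
  finally show ?thesis
    using assms by simp
qed

lemma index_mult_coord_proj:
  fixes M :: "'a :: semiring_1 mat"
  assumes "M \<in> carrier_mat n m" "a < n" "b < m"
  shows "(M * coord_proj m P) $$ (a,b) = (if P b then M $$ (a,b) else 0)"
proof -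
  have "(M * coord_proj m P) $$ (a,b) = (\<Sum>c<m. M $$ (a,c) * (if c = b \<and> P c then 1 else 0))"
    using assms by (simp add: coord_proj_def scalar_prod_def atLeast0LessThan)
  also have "\<dots> = (\<Sum>c<m. if c = b then (if P b then M $$ (a,b) else 0) else 0)"
    by (intro sum.cong) auto
  finally show ?thesis
    using assms by simp
qed

lemma coord_proj_sandwich_eq_iff:
  fixes M :: "'a :: semiring_1 mat"
  assumes "M \<in> carrier_mat n n"
  shows "coord_proj n P * M * coord_proj n P = M \<longleftrightarrow> supported_on P M"
proof -
  have entry: "(coord_proj n P * M * coord_proj n P) $$ (a,b) = (if P a \<and> P b then M $$ (a,b) else 0)"
    if "a < n" "b < n" for a b
  proof -
    have PM: "coord_proj n P * M \<in> carrier_mat n n"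
      using assms by (rule mult_carrier_mat[OF coord_proj_carrier])
    show ?thesis
      unfolding index_mult_coord_proj[OF PM that] index_coord_proj_mult[OF assms that] by simp
  qed
  have "coord_proj n P * M * coord_proj n P = M \<longleftrightarrow>
      (\<forall>a<n. \<forall>b<n. (coord_proj n P * M * coord_proj n P) $$ (a,b) = M $$ (a,b))"
    using assms by (auto simp: mat_eq_iff)
  also have "\<dots> \<longleftrightarrow> supported_on P M"
    using assms entry by (auto simp: supported_on_def)
  finally show ?thesis .
qed

definition preserves_support :: "nat \<Rightarrow> (nat \<Rightarrow> bool) \<Rightarrow> (complex mat \<Rightarrow> complex mat) \<Rightarrow> bool" where
  "preserves_support n P E \<longleftrightarrow> (\<forall>\<rho>. density n \<rho> \<and> supported_on P \<rho> \<longrightarrow> supported_on P (E \<rho>))"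

lemma no_leakage_iff_preserves_support:
  assumes "\<And>\<rho>. \<rho> \<in> carrier_mat (d+v) (d+v) \<Longrightarrow> E \<rho> \<in> carrier_mat (d+v) (d+v)"
  shows "no_leakage d v E \<longleftrightarrow>
    preserves_support (d+v) (\<lambda>i. i < d) E \<and> preserves_support (d+v) (\<lambda>i. d \<le> i) E"
proof -
  have "density (d+v) \<rho> \<Longrightarrow> \<rho> \<in> carrier_mat (d+v) (d+v)" for \<rho>
    by (simp add: density_def psd_def)
  then show ?thesis
    using assms
    by (auto simp: no_leakage_def preserves_support_def proj_A_eq_coord_proj proj_Vac_eq_coord_proj
        coord_proj_sandwich_eq_iff)
qed

definition coord_invariant :: "(nat \<Rightarrow> bool) \<Rightarrow> 'a :: zero mat \<Rightarrow> bool" where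
  "coord_invariant P K \<longleftrightarrow> (\<forall>a<dim_row K. \<forall>c<dim_col K. P c \<and> \<not> P a \<longrightarrow> K $$ (a,c) = 0)"

lemma supported_on_sandwich:
  assumes "K \<in> carrier_mat n n" "\<rho> \<in> carrier_mat n n" "coord_invariant P K" "supported_on P \<rho>"
  shows "supported_on P (K * \<rho> * adj K)"
proof -
  have zero: "(K * \<rho> * adj K) $$ (a,b) = 0" if "a < n" "b < n" "\<not> (P a \<and> P b)" for a b
  proof -
    have "K $$ (a,c) * \<rho> $$ (c,e) * cnj (K $$ (b,e)) = 0" if "c < n" "e < n" for c e
      using assms \<open>a < n\<close> \<open>b < n\<close> \<open>\<not> (P a \<and> P b)\<close> that
      by (cases "\<rho> $$ (c,e) = 0") (auto simp: supported_on_def coord_invariant_def)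
    then show ?thesis
      using assms that by (simp add: index_sandwich del: mult_eq_0_iff)
  qed
  moreover have "K * \<rho> * adj K \<in> carrier_mat n n"
    using assms by (simp add: sandwich_carrier)
  ultimately show ?thesis
    unfolding supported_on_def by (metis carrier_matD)
qed

lemma supported_on_msum:
  assumes "\<forall>M\<in>set Ms. M \<in> carrier_mat n n \<and> supported_on P M"
  shows "supported_on P (msum n Ms)"
proof -
  have "msum n Ms $$ (a,b) = 0" if "a < n" "b < n" "\<not> (P a \<and> P b)" for a b
  proof -
    have "Ms ! k $$ (a,b) = 0" if "k < length Ms" for k
      using assms \<open>a < n\<close> \<open>b < n\<close> \<open>\<not> (P a \<and> P b)\<close> nth_mem[OF that]
      by (fastforce simp: supported_on_def)
    then show ?thesis
      using assms that by (simp add: index_msum)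
  qed
  moreover have "msum n Ms \<in> carrier_mat n n"
    using assms by (simp add: msum_carrier)
  ultimately show ?thesis
    unfolding supported_on_def by (metis carrier_matD)
qed

lemma preserves_support_imp_coord_invariant:
  assumes kraus: "kraus_rep n Ks E" and preserves: "preserves_support n P E" and "K \<in> set Ks"
  shows "coord_invariant P K"
proof -
  obtain k where k: "k < length Ks" "K = Ks ! k"
    using \<open>K \<in> set Ks\<close> by (auto simp: in_set_conv_nth)
  have "K $$ (a,c) = 0" if "a < n" "c < n" "P c" "\<not> P a" for a c
  proof -
    have "supported_on P (mat_unit n c c :: complex mat)"
      using \<open>P c\<close> by (auto simp: supported_on_def mat_unit_def)
    then have "supported_on P (E (mat_unit n c c))"
      using preserves density_mat_unit[OF \<open>c < n\<close>] by (auto simp: preserves_support_def)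
    then have "E (mat_unit n c c) $$ (a,a) = 0"
      using kraus_rep_carrier[OF kraus, of "mat_unit n c c"] that by (auto simp: supported_on_def)
    moreover have "E (mat_unit n c c) $$ (a,a)
        = (\<Sum>i<length Ks. (Ks ! i * mat_unit n c c * adj (Ks ! i)) $$ (a,a))"
      using that by (simp add: index_kraus_rep[OF kraus])
    moreover have "\<dots> = (\<Sum>i<length Ks. Ks ! i $$ (a,c) * cnj (Ks ! i $$ (a,c)))"
      by (intro sum.cong refl index_sandwich_mat_unit) (use that kraus_rep_nth_carrier[OF kraus] in auto)
    ultimately have "(\<Sum>i<length Ks. Ks ! i $$ (a,c) * cnj (Ks ! i $$ (a,c))) = 0"
      by simp
    then show ?thesis
      using k by (simp add: sum_mult_cnj_eq_0_iff)
  qed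
  moreover have "K \<in> carrier_mat n n"
    using kraus \<open>K \<in> set Ks\<close> by (simp add: kraus_rep_def)
  ultimately show ?thesis
    by (auto simp: coord_invariant_def)
qed

lemma coord_invariant_imp_preserves_support:
  assumes kraus: "kraus_rep n Ks E" and invariant: "\<forall>K\<in>set Ks. coord_invariant P K"
  shows "preserves_support n P E"
  unfolding preserves_support_def
proof (intro allI impI)
  fix \<rho> assume "density n \<rho> \<and> supported_on P \<rho>"
  then have \<rho>: "\<rho> \<in> carrier_mat n n" "supported_on P \<rho>"
    by (auto simp: density_def psd_def)
  have "\<forall>M\<in>set (map (\<lambda>K. K * \<rho> * adj K) Ks). M \<in> carrier_mat n n \<and> supported_on P M"
    using kraus invariant \<rho> by (auto simp: kraus_rep_def intro: sandwich_carrier supported_on_sandwich)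
  then show "supported_on P (E \<rho>)"
    using kraus \<rho> by (simp add: kraus_rep_def supported_on_msum)
qed

lemma preserves_support_iff_coord_invariant:
  "kraus_rep n Ks E \<Longrightarrow> preserves_support n P E \<longleftrightarrow> (\<forall>K\<in>set Ks. coord_invariant P K)"
  using preserves_support_imp_coord_invariant coord_invariant_imp_preserves_support by blast

lemma coord_invariant_mat_lincomb:
  assumes "\<forall>K\<in>set Ks. K \<in> carrier_mat n n \<and> coord_invariant P K"
  shows "coord_invariant P (mat_lincomb n Ks g)"
  using assms nth_mem by (fastforce simp: coord_invariant_def mat_lincomb_def intro!: sum.neutral)

definition embedA :: "nat \<Rightarrow> nat \<Rightarrow> 'a :: zero mat \<Rightarrow> 'a mat" where
  "embedA d v \<rho> = mat (d+v) (d+v) (\<lambda>(a,b). if a < d \<and> b < d then \<rho> $$ (a,b) else 0)"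

lemma embedA_carrier [simp]: "embedA d v \<rho> \<in> carrier_mat (d+v) (d+v)"
  by (simp add: embedA_def)

lemma blockA_carrier [simp]: "blockA d K \<in> carrier_mat d d"
  by (simp add: blockA_def)

lemma blockA_sandwich_embedA:
  assumes K: "K \<in> carrier_mat (d+v) (d+v)" and K': "K' \<in> carrier_mat (d+v) (d+v)"
    and \<rho>: "\<rho> \<in> carrier_mat d d"
  shows "blockA d (K * embedA d v \<rho> * adj K') = blockA d K * \<rho> * adj (blockA d K')"
proof (rule eq_matI)
  fix a b
  assume "a < dim_row (blockA d K * \<rho> * adj (blockA d K'))" "b < dim_col (blockA d K * \<rho> * adj (blockA d K'))"
  then have ab: "a < d" "b < d"
    by (auto simp: blockA_def adj_def)
  let ?T = "\<lambda>c e. K $$ (a,c) * embedA d v \<rho> $$ (c,e) * cnj (K' $$ (b,e))"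
  have vanish: "?T c e = 0" if "c < d+v" "e < d+v" "\<not> (c < d \<and> e < d)" for c e
    using that by (auto simp: embedA_def)
  have "blockA d (K * embedA d v \<rho> * adj K') $$ (a,b) = (\<Sum>c<d+v. \<Sum>e<d+v. ?T c e)"
    using K K' ab by (simp add: blockA_def index_sandwich[OF K _ K'])
  also have "\<dots> = (\<Sum>c<d. \<Sum>e<d+v. ?T c e)"
    using vanish by (intro sum.mono_neutral_right) (auto intro!: sum.neutral)
  also have "\<dots> = (\<Sum>c<d. \<Sum>e<d. ?T c e)"
    using vanish by (intro sum.cong refl sum.mono_neutral_right) auto
  also have "\<dots> = (\<Sum>c<d. \<Sum>e<d. blockA d K $$ (a,c) * \<rho> $$ (c,e) * cnj (blockA d K' $$ (b,e)))"
    using ab by (intro sum.cong refl) (simp add: embedA_def blockA_def)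
  also have "\<dots> = (blockA d K * \<rho> * adj (blockA d K')) $$ (a,b)"
    by (rule index_sandwich[symmetric]) (use \<rho> ab in auto)
  finally show "blockA d (K * embedA d v \<rho> * adj K') $$ (a,b) = (blockA d K * \<rho> * adj (blockA d K')) $$ (a,b)" .
qed (auto simp: blockA_def adj_def)

lemma blockA_add:
  assumes "A \<in> carrier_mat n n" "B \<in> carrier_mat n n" "d \<le> n"
  shows "blockA d (A + B) = blockA d A + blockA d B"
  using assms by (intro eq_matI) (auto simp: blockA_def)

lemma blockA_msum:
  assumes "\<forall>M\<in>set Ms. M \<in> carrier_mat (d+v) (d+v)"
  shows "blockA d (msum (d+v) Ms) = msum d (map (blockA d) Ms)"
  using assms
proof (induction Ms)
  case Nil
  show ?case
    by (auto simp: msum_def blockA_def)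
next
  case (Cons M Ms)
  then have "blockA d (M + msum (d+v) Ms) = blockA d M + blockA d (msum (d+v) Ms)"
    by (intro blockA_add[of _ "d+v"] msum_carrier) auto
  with Cons show ?case
    by (simp add: msum_def)
qed

lemma kraus_rep_restriction:
  assumes "kraus_rep (d+v) Ks E" "\<rho> \<in> carrier_mat d d"
  shows "msum d (map (\<lambda>K. blockA d K * \<rho> * adj (blockA d K)) Ks) = blockA d (E (embedA d v \<rho>))"
proof -
  have Ks: "\<forall>K\<in>set Ks. K \<in> carrier_mat (d+v) (d+v)"
    using assms by (simp add: kraus_rep_def)
  have "blockA d (E (embedA d v \<rho>))
      = blockA d (msum (d+v) (map (\<lambda>K. K * embedA d v \<rho> * adj K) Ks))"
    using assms by (simp add: kraus_rep_def)
  also have "\<dots> = msum d (map (blockA d) (map (\<lambda>K. K * embedA d v \<rho> * adj K) Ks))"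
    by (rule blockA_msum) (use Ks in \<open>auto intro: sandwich_carrier\<close>)
  also have "map (blockA d) (map (\<lambda>K. K * embedA d v \<rho> * adj K) Ks)
      = map (\<lambda>K. blockA d K * \<rho> * adj (blockA d K)) Ks"
    unfolding map_map by (rule map_cong) (use Ks assms(2) in \<open>auto simp: blockA_sandwich_embedA\<close>)
  finally show ?thesis
    by simp
qed

lemma vacuum_extension_iff:
  "vacuum_extension d v C E \<longleftrightarrow>
    is_channel (d+v) E \<and> no_leakage d v E \<and>
    (\<forall>\<rho>\<in>carrier_mat d d. C \<rho> = blockA d (E (embedA d v \<rho>)))"
  by (auto simp: vacuum_extension_def is_channel_def kraus_rep_restriction)

lemma vacuum_extension_carrier:
  "vacuum_extension d v C E \<Longrightarrow> \<rho> \<in> carrier_mat (d+v) (d+v) \<Longrightarrow> E \<rho> \<in> carrier_mat (d+v) (d+v)"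
  by (auto simp: vacuum_extension_def intro: kraus_rep_carrier)

lemma extreme_map_midpoint:
  assumes extreme: "extreme_map n S E" and "E1 \<in> S" "E2 \<in> S"
    and carrier: "\<And>\<rho>. \<rho> \<in> carrier_mat n n \<Longrightarrow>
      E \<rho> \<in> carrier_mat n n \<and> E1 \<rho> \<in> carrier_mat n n \<and> E2 \<rho> \<in> carrier_mat n n"
    and mid: "\<And>\<rho> a b. \<rho> \<in> carrier_mat n n \<Longrightarrow> a < n \<Longrightarrow> b < n \<Longrightarrow>
      E1 \<rho> $$ (a,b) + E2 \<rho> $$ (a,b) = 2 * E \<rho> $$ (a,b)"
    and "\<rho> \<in> carrier_mat n n"
  shows "E1 \<rho> = E \<rho>"
proof -
  have "E \<rho>' = complex_of_real (1/2) \<cdot>\<^sub>m E1 \<rho>' + complex_of_real (1 - 1/2) \<cdot>\<^sub>m E2 \<rho>'"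
    if "\<rho>' \<in> carrier_mat n n" for \<rho>'
    using carrier[OF that] mid[OF that] by (intro eq_matI) (auto simp: field_simps)
  then have "E1 \<in> S \<and> E2 \<in> S \<and> 0 < (1/2 :: real) \<and> (1/2 :: real) < 1 \<and>
      (\<forall>\<rho>\<in>carrier_mat n n. E \<rho> = complex_of_real (1/2) \<cdot>\<^sub>m E1 \<rho> + complex_of_real (1 - 1/2) \<cdot>\<^sub>m E2 \<rho>)"
    using \<open>E1 \<in> S\<close> \<open>E2 \<in> S\<close> by simp
  then show ?thesis
    using extreme \<open>\<rho> \<in> carrier_mat n n\<close> unfolding extreme_map_def by blast
qed

section \<open>Hermitian coefficient matrices\<close>

lemma homogeneous_system_nontrivial_solution:
  fixes coeff :: "'e \<Rightarrow> 'u \<Rightarrow> 'a :: idom"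
  assumes U: "finite U" and Eqs: "finite Eqs" and fewer: "card Eqs < card U"
  shows "\<exists>y. (\<exists>u\<in>U. y u \<noteq> 0) \<and> (\<forall>e\<in>Eqs. (\<Sum>u\<in>U. coeff e u * y u) = 0)"
proof -
  define N where "N = card U"
  define M where "M = card Eqs"
  obtain f where f: "bij_betw f {0..<N} U"
    using ex_bij_betw_nat_finite[OF U] N_def by blast
  obtain h where h: "bij_betw h {0..<M} Eqs"
    using ex_bij_betw_nat_finite[OF Eqs] M_def by blast
  have "M < N"
    using fewer by (simp add: M_def N_def)
  define A where "A = mat N N (\<lambda>(a,b). if a < M then coeff (h a) (f b) else 0)"
  have A: "A \<in> carrier_mat N N"
    by (simp add: A_def)
  have "A = mat\<^sub>r N N (\<lambda>i. if i = N - 1 then 0\<^sub>v N else row A i)"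
    using \<open>M < N\<close> by (intro eq_matI) (auto simp: A_def)
  moreover have "det (mat\<^sub>r N N (\<lambda>i. if i = N - 1 then 0\<^sub>v N else row A i)) = 0"
    using \<open>M < N\<close> by (intro det_row_0) (auto simp: A_def)
  ultimately have "det A = 0"
    by simp
  then obtain w where w: "w \<in> carrier_vec N" "w \<noteq> 0\<^sub>v N" "A *\<^sub>v w = 0\<^sub>v N"
    using det_0_iff_vec_prod_zero[OF A] by blast
  define y where "y u = w $ inv_into {0..<N} f u" for u
  have y_f: "y (f b) = w $ b" if "b < N" for b
    using f that by (simp add: y_def bij_betw_inv_into_left)
  obtain b where b: "b < N" "w $ b \<noteq> 0"
    using w by (metis vec_eq_iff index_zero_vec carrier_vecD)
  have "f b \<in> U" "y (f b) \<noteq> 0"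
    using f b y_f by (auto simp: bij_betw_def)
  moreover have "(\<Sum>u\<in>U. coeff e u * y u) = 0" if "e \<in> Eqs" for e
  proof -
    define a where "a = inv_into {0..<M} h e"
    have a: "a < M" "h a = e"
      using h that by (auto simp: a_def bij_betw_def inv_into_into f_inv_into_f)
    have "(\<Sum>u\<in>U. coeff e u * y u) = (\<Sum>b\<in>{0..<N}. coeff e (f b) * y (f b))"
      by (rule sum.reindex_bij_betw[OF f, symmetric])
    also have "\<dots> = (A *\<^sub>v w) $ a"
      using a \<open>M < N\<close> w(1) y_f by (simp add: A_def scalar_prod_def)
    also have "\<dots> = 0"
      using w a \<open>M < N\<close> by simp
    finally show ?thesis .
  qed
  ultimately show ?thesis
    by blast
qed

definition hermitian_coeffs :: "('a \<Rightarrow> 'a \<Rightarrow> complex) \<Rightarrow> bool" where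
  "hermitian_coeffs X \<longleftrightarrow> (\<forall>i j. X j i = cnj (X i j))"

lemma hermitian_coeffs_cnj: "hermitian_coeffs X \<Longrightarrow> cnj (X i j) = X j i"
  unfolding hermitian_coeffs_def by metis

lemma exists_hermitian_nonzero:
  assumes "Y \<in> V" "Y i j \<noteq> 0"
    and adj_closed: "\<And>X. X \<in> V \<Longrightarrow> (\<lambda>i j. cnj (X j i)) \<in> V"
    and add_closed: "\<And>X X'. X \<in> V \<Longrightarrow> X' \<in> V \<Longrightarrow> (\<lambda>i j. X i j + X' i j) \<in> V"
    and scale_closed: "\<And>X c. X \<in> V \<Longrightarrow> (\<lambda>i j. c * X i j) \<in> V"
  shows "\<exists>X\<in>V. hermitian_coeffs X \<and> X i j \<noteq> 0"
proof -
  define Y' where "Y' i j = cnj (Y j i)" for i j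
  have "Y' \<in> V"
    using adj_closed[OF \<open>Y \<in> V\<close>] by (simp add: Y'_def[abs_def])
  define X1 where "X1 i j = Y i j + Y' i j" for i j
  define X2 where "X2 i j = \<i> * (Y i j + - 1 * Y' i j)" for i j
  have "X1 \<in> V"
    unfolding X1_def[abs_def] using \<open>Y \<in> V\<close> \<open>Y' \<in> V\<close> by (rule add_closed)
  moreover have "X2 \<in> V"
    unfolding X2_def[abs_def]
    by (rule scale_closed, rule add_closed[OF \<open>Y \<in> V\<close>], rule scale_closed[OF \<open>Y' \<in> V\<close>])
  moreover have "hermitian_coeffs X1" "hermitian_coeffs X2"
    by (auto simp: hermitian_coeffs_def X1_def X2_def Y'_def algebra_simps)
  moreover have "X1 i j \<noteq> 0 \<or> X2 i j \<noteq> 0"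
  proof (rule ccontr)
    assume "\<not> (X1 i j \<noteq> 0 \<or> X2 i j \<noteq> 0)"
    then have "Y i j + Y' i j = 0" "Y i j - Y' i j = 0"
      by (auto simp: X1_def X2_def)
    then show False
      using \<open>Y i j \<noteq> 0\<close> by (simp add: algebra_simps)
  qed
  ultimately show ?thesis
    by blast
qed

definition pair_vector :: "complex \<Rightarrow> nat \<Rightarrow> nat \<Rightarrow> nat \<Rightarrow> complex" where
  "pair_vector x i j p = sqrt (cmod x / 2) * (of_bool (p = i) + of_bool (p = j) * cnj (sgn x))"

lemma pair_vector_gram:
  "pair_vector x i j p * cnj (pair_vector x i j q)
    = of_bool (p = i) * of_bool (q = i) * complex_of_real (cmod x / 2)
      + of_bool (p = j) * of_bool (q = j) * complex_of_real (cmod x / 2)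
      + of_bool (p = i) * of_bool (q = j) * (x / 2) + of_bool (p = j) * of_bool (q = i) * (cnj x / 2)"
proof -
  define s where "s = complex_of_real (sqrt (cmod x / 2))"
  define c where "c = cnj (sgn x)"
  have ss: "s * cnj s = cmod x / 2"
    by (simp add: s_def of_real_mult[symmetric] del: of_real_mult)
  have cmod_mult_sgn: "complex_of_real (cmod x) * sgn x = x"
    by (cases "x = 0") (simp_all add: sgn_eq)
  have "cmod x / 2 * cnj c = complex_of_real (cmod x) * sgn x / 2"
    "cmod x / 2 * c = cnj (complex_of_real (cmod x) * sgn x) / 2"
    by (simp_all add: c_def)
  then have sc: "cmod x / 2 * cnj c = x / 2" and sc': "cmod x / 2 * c = cnj x / 2"
    by (simp_all only: cmod_mult_sgn)
  have "sgn x * cnj (sgn x) = 1" if "x \<noteq> 0"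
    using complex_norm_square[of "sgn x"] that by (simp add: norm_sgn)
  then have scc: "cmod x / 2 * (c * cnj c) = cmod x / 2"
    by (cases "x = 0") (simp_all add: c_def mult.commute)
  have "pair_vector x i j p * cnj (pair_vector x i j q)
      = s * cnj s * (of_bool (p = i) * of_bool (q = i) + of_bool (p = i) * of_bool (q = j) * cnj c
          + of_bool (p = j) * of_bool (q = i) * c + of_bool (p = j) * of_bool (q = j) * (c * cnj c))"
    by (simp add: pair_vector_def s_def c_def algebra_simps)
  also have "\<dots> = of_bool (p = i) * of_bool (q = i) * complex_of_real (cmod x / 2)
      + of_bool (p = j) * of_bool (q = j) * complex_of_real (cmod x / 2)
      + of_bool (p = i) * of_bool (q = j) * (x / 2) + of_bool (p = j) * of_bool (q = i) * (cnj x / 2)"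
    unfolding ss using sc sc' scc by (simp add: algebra_simps)
  finally show ?thesis .
qed

lemma sum_pair_vector_gram:
  fixes B :: "nat \<Rightarrow> nat \<Rightarrow> complex"
  assumes herm: "hermitian_coeffs B" and "p < r" "q < r"
  shows "(\<Sum>i<r. \<Sum>j<r. pair_vector (B i j) i j p * cnj (pair_vector (B i j) i j q))
    = of_bool (p = q) * complex_of_real (\<Sum>j<r. cmod (B p j)) + B p q"
proof -
  define h1 where "h1 i j = complex_of_real (cmod (B i j) / 2)" for i j
  define h2 where "h2 i j = B i j / 2" for i j
  define h3 where "h3 i j = cnj (B i j) / 2" for i j
  have "(\<Sum>i<r. \<Sum>j<r. pair_vector (B i j) i j p * cnj (pair_vector (B i j) i j q))
      = (\<Sum>i<r. \<Sum>j<r. of_bool (p = i) * of_bool (q = i) * h1 i j)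
        + (\<Sum>i<r. \<Sum>j<r. of_bool (p = j) * of_bool (q = j) * h1 i j)
        + (\<Sum>i<r. \<Sum>j<r. of_bool (p = i) * of_bool (q = j) * h2 i j)
        + (\<Sum>i<r. \<Sum>j<r. of_bool (p = j) * of_bool (q = i) * h3 i j)"
    unfolding pair_vector_gram h1_def h2_def h3_def by (simp only: sum.distrib)
  also have "\<dots> = of_bool (p = q) * (\<Sum>j<r. h1 p j) + of_bool (p = q) * (\<Sum>i<r. h1 i p) + h2 p q + h3 q p"
  proof -
    have "(\<Sum>i<r. \<Sum>j<r. of_bool (p = i) * of_bool (q = i) * h1 i j) = of_bool (p = q) * (\<Sum>j<r. h1 p j)"
      "(\<Sum>i<r. \<Sum>j<r. of_bool (p = i) * of_bool (q = j) * h2 i j) = h2 p q"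
      using assms by (simp_all add: mult.assoc sum_distrib_left[symmetric])
    moreover have "(\<Sum>i<r. \<Sum>j<r. of_bool (p = j) * of_bool (q = j) * h1 i j) = of_bool (p = q) * (\<Sum>i<r. h1 i p)"
      "(\<Sum>i<r. \<Sum>j<r. of_bool (p = j) * of_bool (q = i) * h3 i j) = h3 q p"
      using assms by (subst sum.swap, simp add: mult.assoc sum_distrib_left[symmetric])+
    ultimately show ?thesis
      by (simp only:)
  qed
  also have "\<dots> = of_bool (p = q) * complex_of_real (\<Sum>j<r. cmod (B p j)) + B p q"
  proof -
    have h1_swap: "(\<Sum>i<r. h1 i p) = (\<Sum>j<r. h1 p j)"
      by (intro sum.cong refl) (simp add: h1_def hermitian_coeffs_cnj[OF herm, of p, symmetric])
    have h1_sum: "(\<Sum>j<r. h1 p j) = complex_of_real (\<Sum>j<r. cmod (B p j)) / 2"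
      by (simp add: h1_def sum_divide_distrib)
    have h3: "h3 q p = B p q / 2"
      by (simp add: h3_def hermitian_coeffs_cnj[OF herm])
    show ?thesis
      unfolding h1_swap h1_sum h3 h2_def by (simp add: field_simps)
  qed
  finally show ?thesis .
qed

text \<open>The off-diagonal entries are carried by one rank-one term per ordered pair of indices;
  diagonal dominance leaves a nonnegative remainder \<open>D\<close> on the diagonal.\<close>

lemma diag_dominant_gram:
  fixes A :: "nat \<Rightarrow> nat \<Rightarrow> complex"
  assumes herm: "hermitian_coeffs A"
    and dominant: "\<And>p. p < r \<Longrightarrow> (\<Sum>j\<in>{..<r}-{p}. cmod (A p j)) \<le> Re (A p p)"
  shows "\<exists>L (g :: nat \<Rightarrow> nat \<Rightarrow> complex). \<forall>p<r. \<forall>q<r. A p q = (\<Sum>k<L. g k p * cnj (g k q))"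
proof -
  define B where "B i j = of_bool (i \<noteq> j) * A i j" for i j
  define D where "D p = Re (A p p) - (\<Sum>j<r. cmod (B p j))" for p
  define f :: "nat + nat \<times> nat \<Rightarrow> nat \<Rightarrow> complex" where
    "f t p = (case t of Inl i \<Rightarrow> of_bool (p = i) * sqrt (D i) | Inr (i,j) \<Rightarrow> pair_vector (B i j) i j p)"
    for t p
  define T where "T = {..<r} <+> {..<r} \<times> {..<r}"
  have "hermitian_coeffs B"
    using hermitian_coeffs_cnj[OF herm] by (auto simp: hermitian_coeffs_def B_def)
  have gram: "(\<Sum>t\<in>T. f t p * cnj (f t q)) = A p q" if "p < r" "q < r" for p q
  proof -
    have "(\<Sum>j<r. cmod (B p j)) = (\<Sum>j\<in>{..<r}-{p}. cmod (A p j))"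
      using that by (simp add: sum.remove[of "{..<r}" p] B_def)
    then have "D p \<ge> 0"
      using dominant[OF that(1)] by (simp add: D_def)
    have "f (Inl i) p * cnj (f (Inl i) q) = of_bool (p = i) * of_bool (q = i) * complex_of_real (D i)" for i
      using \<open>D p \<ge> 0\<close> by (cases "p = i") (simp_all add: f_def flip: of_real_mult)
    then have "(\<Sum>i<r. f (Inl i) p * cnj (f (Inl i) q)) = of_bool (p = q) * complex_of_real (D p)"
      using that by (simp add: mult.assoc)
    moreover have "(\<Sum>(i,j)\<in>{..<r} \<times> {..<r}. f (Inr (i,j)) p * cnj (f (Inr (i,j)) q))
        = of_bool (p = q) * complex_of_real (\<Sum>j<r. cmod (B p j)) + B p q"
      unfolding sum.cartesian_product[symmetric] f_def sum.case prod.case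
      by (rule sum_pair_vector_gram[OF \<open>hermitian_coeffs B\<close> that])
    moreover have "A p q = of_bool (p = q) * complex_of_real (D p + (\<Sum>j<r. cmod (B p j))) + B p q"
      using hermitian_coeffs_cnj[OF herm, of p p]
      by (auto simp: D_def B_def complex_eq_iff intro: complex_eqI)
    ultimately show ?thesis
      unfolding T_def sum.Plus[OF finite_lessThan finite_cartesian_product[OF finite_lessThan finite_lessThan]]
      by (simp add: algebra_simps)
  qed
  obtain h where h: "bij_betw h {0..<card T} T"
    using ex_bij_betw_nat_finite[of T] by (auto simp: T_def)
  have "A p q = (\<Sum>k<card T. f (h k) p * cnj (f (h k) q))" if "p < r" "q < r" for p q
    using sum.reindex_bij_betw[OF h, of "\<lambda>t. f t p * cnj (f t q)"] gram[OF that]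
    by (simp only: atLeast0LessThan)
  then show ?thesis
    by (intro exI[of _ "card T"] exI[of _ "\<lambda>k. f (h k)"]) blast
qed

section \<open>Perturbations of a vacuum extension\<close>

locale vacuum_kraus =
  fixes d v :: nat and C E :: "complex mat \<Rightarrow> complex mat" and Ks :: "complex mat list"
  assumes vacuum_ext: "vacuum_extension d v C E"
    and kraus: "kraus_rep (d+v) Ks E"
begin

definition zero_blocks :: "nat set" where
  "zero_blocks = {i. i < length Ks \<and> blockA d (Ks ! i) = 0\<^sub>m d d}"

lemma kraus_carrier: "\<forall>K\<in>set Ks. K \<in> carrier_mat (d+v) (d+v)"
  using kraus by (simp add: kraus_rep_def)

lemma index_adj_mult_kraus:
  assumes "i < length Ks" "j < length Ks" "a < d+v" "b < d+v"
  shows "(adj (Ks ! i) * Ks ! j) $$ (a,b) = (\<Sum>c<d+v. cnj (Ks ! i $$ (c,a)) * Ks ! j $$ (c,b))"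
  using assms kraus_rep_nth_carrier[OF kraus] by (intro index_adj_mult) auto

lemma kraus_coord_invariant:
  "\<forall>K\<in>set Ks. coord_invariant (\<lambda>i. i < d) K \<and> coord_invariant (\<lambda>i. d \<le> i) K"
proof -
  have "no_leakage d v E"
    using vacuum_ext by (simp add: vacuum_extension_iff)
  then show ?thesis
    by (simp add: no_leakage_iff_preserves_support[OF kraus_rep_carrier[OF kraus]]
        preserves_support_iff_coord_invariant[OF kraus])
qed

lemma kraus_block_diagonal:
  assumes "i < length Ks" "a < d+v" "c < d+v" "(a < d) \<noteq> (c < d)"
  shows "Ks ! i $$ (a,c) = 0"
  using assms kraus_coord_invariant nth_mem[OF assms(1)] kraus_rep_nth_carrier[OF kraus assms(1)]
  by (auto simp: coord_invariant_def)

lemma zero_blocks_entry: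
  assumes "i \<in> zero_blocks" "a < d" "c < d"
  shows "Ks ! i $$ (a,c) = 0"
proof -
  have "blockA d (Ks ! i) $$ (a,c) = 0"
    using assms by (simp add: zero_blocks_def)
  then show ?thesis
    using assms by (simp add: blockA_def)
qed

lemma finite_zero_blocks: "finite zero_blocks"
  by (rule finite_subset[of _ "{..<length Ks}"]) (auto simp: zero_blocks_def)

lemma exists_nonzero_blockA:
  assumes "0 < d"
  shows "\<exists>j<length Ks. j \<notin> zero_blocks"
proof (rule ccontr)
  assume "\<not> (\<exists>j<length Ks. j \<notin> zero_blocks)"
  then have "Ks ! i $$ (c,0) = 0" if "i < length Ks" "c < d+v" for i c
    using that assms zero_blocks_entry kraus_block_diagonal[of i c 0] by (cases "c < d") auto
  then have "(adj (Ks ! i) * Ks ! i) $$ (0,0) = 0" if "i < length Ks" for i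
    using that assms by (simp add: index_adj_mult_kraus)
  then have "(\<Sum>i<length Ks. (adj (Ks ! i) * Ks ! i) $$ (0,0)) = 0"
    by simp
  then show False
    using index_kraus_rep_tp[OF kraus, of 0 0] assms by simp
qed

lemma adj_mult_zero_blocks:
  assumes "i \<in> zero_blocks \<or> j \<in> zero_blocks" "i < length Ks" "j < length Ks"
    and "a < d+v" "b < d+v" "a < d \<or> b < d"
  shows "(adj (Ks ! i) * Ks ! j) $$ (a,b) = 0"
proof -
  have "Ks ! i $$ (c,a) = 0 \<or> Ks ! j $$ (c,b) = 0" if "c < d+v" for c
  proof (cases "c < d \<and> a < d \<and> b < d")
    case True
    then show ?thesis
      using assms(1) zero_blocks_entry by blast
  next
    case False
    then show ?thesis
      using assms that kraus_block_diagonal[of i c a] kraus_block_diagonal[of j c b] by auto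
  qed
  then show ?thesis
    unfolding index_adj_mult_kraus[OF assms(2-5)] by (intro sum.neutral) auto
qed

text \<open>Directions \<open>X\<close> in which \<open>E\<close> can be moved to \<open>\<rho> \<mapsto> E \<rho> + (\<Sum>i j. X i j \<cdot> K\<^sub>i \<rho> K\<^sub>j\<^sup>*)\<close>
  inside the vacuum extensions of \<open>C\<close>: the second condition is trace preservation, which
  off the vacuum block holds automatically by the first one.\<close>

definition perturbations :: "(nat \<Rightarrow> nat \<Rightarrow> complex) set" where
  "perturbations = {X.
     (\<forall>i j. X i j \<noteq> 0 \<longrightarrow> i < length Ks \<and> j < length Ks \<and> (i \<in> zero_blocks \<or> j \<in> zero_blocks)) \<and>
     (\<forall>p q. d \<le> p \<longrightarrow> p < d+v \<longrightarrow> d \<le> q \<longrightarrow> q < d+v \<longrightarrow>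
        (\<Sum>i<length Ks. \<Sum>j<length Ks. X i j * (adj (Ks ! j) * Ks ! i) $$ (p,q)) = 0)}"

lemma perturbation_kernel:
  assumes "X \<in> perturbations" "a < d+v" "b < d+v"
  shows "(\<Sum>i<length Ks. \<Sum>j<length Ks. X i j * (adj (Ks ! j) * Ks ! i) $$ (a,b)) = 0"
proof (cases "d \<le> a \<and> d \<le> b")
  case True
  then show ?thesis
    using assms by (simp add: perturbations_def)
next
  case False
  then have off_vacuum: "a < d \<or> b < d"
    by auto
  have "X i j * (adj (Ks ! j) * Ks ! i) $$ (a,b) = 0" for i j
  proof (cases "X i j = 0")
    case False
    then have "j < length Ks" "i < length Ks" "j \<in> zero_blocks \<or> i \<in> zero_blocks"
      using assms(1) by (auto simp: perturbations_def)
    then show ?thesis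
      using adj_mult_zero_blocks assms(2,3) off_vacuum by simp
  qed simp
  then show ?thesis
    by (simp del: mult_eq_0_iff)
qed

lemma perturbations_add:
  assumes "X \<in> perturbations" "Y \<in> perturbations"
  shows "(\<lambda>i j. X i j + Y i j) \<in> perturbations"
proof -
  have "X i j + Y i j \<noteq> 0 \<Longrightarrow> X i j \<noteq> 0 \<or> Y i j \<noteq> 0" for i j
    by auto
  then show ?thesis
    using assms by (simp add: perturbations_def distrib_right sum.distrib) blast
qed

lemma perturbations_scale:
  assumes "X \<in> perturbations"
  shows "(\<lambda>i j. c * X i j) \<in> perturbations"
  unfolding perturbations_def mem_Collect_eq
proof (intro conjI allI impI)
  fix i j assume "c * X i j \<noteq> 0"
  then show "i < length Ks" "j < length Ks" "i \<in> zero_blocks \<or> j \<in> zero_blocks"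
    using assms by (auto simp: perturbations_def)
next
  fix p q assume "d \<le> p" "p < d+v" "d \<le> q" "q < d+v"
  have "(\<Sum>i<length Ks. \<Sum>j<length Ks. c * X i j * (adj (Ks ! j) * Ks ! i) $$ (p,q))
      = c * (\<Sum>i<length Ks. \<Sum>j<length Ks. X i j * (adj (Ks ! j) * Ks ! i) $$ (p,q))"
    by (simp add: sum_distrib_left mult.assoc)
  also have "\<dots> = 0"
    using assms \<open>d \<le> p\<close> \<open>p < d+v\<close> \<open>d \<le> q\<close> \<open>q < d+v\<close> by (simp add: perturbations_def)
  finally show "(\<Sum>i<length Ks. \<Sum>j<length Ks. c * X i j * (adj (Ks ! j) * Ks ! i) $$ (p,q)) = 0" .
qed

lemma perturbations_adj:
  assumes "X \<in> perturbations"
  shows "(\<lambda>i j. cnj (X j i)) \<in> perturbations"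
proof -
  have "(\<Sum>i<length Ks. \<Sum>j<length Ks. cnj (X j i) * (adj (Ks ! j) * Ks ! i) $$ (p,q)) = 0"
    if "d \<le> p" "p < d+v" "d \<le> q" "q < d+v" for p q
  proof -
    have "(adj (Ks ! j) * Ks ! i) $$ (p,q) = cnj ((adj (Ks ! i) * Ks ! j) $$ (q,p))"
      if "i < length Ks" "j < length Ks" for i j
      using that \<open>p < d+v\<close> \<open>q < d+v\<close> by (simp add: index_adj_mult_kraus cnj_sum mult.commute)
    then have "(\<Sum>i<length Ks. \<Sum>j<length Ks. cnj (X j i) * (adj (Ks ! j) * Ks ! i) $$ (p,q))
        = cnj (\<Sum>i<length Ks. \<Sum>j<length Ks. X j i * (adj (Ks ! i) * Ks ! j) $$ (q,p))"
      by (simp add: cnj_sum del: complex_cnj_mult) (simp add: cnj_sum)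
    also have "(\<Sum>i<length Ks. \<Sum>j<length Ks. X j i * (adj (Ks ! i) * Ks ! j) $$ (q,p)) = 0"
      using assms that by (subst sum.swap) (simp add: perturbations_def)
    finally show ?thesis
      by simp
  qed
  then show ?thesis
    using assms by (auto simp: perturbations_def)
qed

context
  fixes X :: "nat \<Rightarrow> nat \<Rightarrow> complex" and g :: "nat \<Rightarrow> nat \<Rightarrow> complex" and L :: nat
  assumes gram: "\<And>i j. i < length Ks \<Longrightarrow> j < length Ks \<Longrightarrow>
    (\<Sum>k<L. g k i * cnj (g k j)) = of_bool (i = j) + X i j"
begin

abbreviation perturbed_kraus :: "complex mat list" where
  "perturbed_kraus \<equiv> map (\<lambda>k. mat_lincomb (d+v) Ks (g k)) [0..<L]"

lemma index_perturbed_kraus_map: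
  assumes "\<rho> \<in> carrier_mat (d+v) (d+v)" "a < d+v" "b < d+v"
  shows "kraus_map (d+v) perturbed_kraus \<rho> $$ (a,b)
    = E \<rho> $$ (a,b) + (\<Sum>i<length Ks. \<Sum>j<length Ks. X i j * (Ks ! i * \<rho> * adj (Ks ! j)) $$ (a,b))"
proof -
  have "kraus_map (d+v) perturbed_kraus \<rho> $$ (a,b)
      = (\<Sum>i<length Ks. \<Sum>j<length Ks. (of_bool (i = j) + X i j) * (Ks ! i * \<rho> * adj (Ks ! j)) $$ (a,b))"
    using assms kraus_carrier by (simp add: index_kraus_map_mat_lincomb gram)
  also have "\<dots> = (\<Sum>i<length Ks. (Ks ! i * \<rho> * adj (Ks ! i)) $$ (a,b))
      + (\<Sum>i<length Ks. \<Sum>j<length Ks. X i j * (Ks ! i * \<rho> * adj (Ks ! j)) $$ (a,b))"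
    by (simp only: distrib_right sum.distrib sum_of_bool_eq_mult) simp
  finally show ?thesis
    unfolding index_kraus_rep[OF kraus assms] .
qed

lemma perturbed_kraus_rep:
  assumes "X \<in> perturbations" "hermitian_coeffs X"
  shows "kraus_rep (d+v) perturbed_kraus (kraus_map (d+v) perturbed_kraus)"
proof -
  note cnj_X = hermitian_coeffs_cnj[OF assms(2)]
  have "msum (d+v) (map (\<lambda>M. adj M * M) perturbed_kraus) $$ (a,b) = 1\<^sub>m (d+v) $$ (a,b)"
    if "a < d+v" "b < d+v" for a b
  proof -
    have "msum (d+v) (map (\<lambda>M. adj M * M) perturbed_kraus) $$ (a,b)
        = (\<Sum>i<length Ks. \<Sum>j<length Ks. (of_bool (i = j) + X j i) * (adj (Ks ! i) * Ks ! j) $$ (a,b))"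
      using that kraus_carrier by (subst index_msum_adj_mult_mat_lincomb) (simp_all add: gram cnj_X)
    also have "\<dots> = (\<Sum>i<length Ks. (adj (Ks ! i) * Ks ! i) $$ (a,b))
        + (\<Sum>i<length Ks. \<Sum>j<length Ks. X j i * (adj (Ks ! i) * Ks ! j) $$ (a,b))"
      by (simp only: distrib_right sum.distrib sum_of_bool_eq_mult) simp
    also have "(\<Sum>i<length Ks. \<Sum>j<length Ks. X j i * (adj (Ks ! i) * Ks ! j) $$ (a,b)) = 0"
      using perturbation_kernel[OF assms(1) that] by (subst sum.swap)
    finally show ?thesis
      using that by (simp only: index_kraus_rep_tp[OF kraus that] index_one_mat) simp
  qed
  moreover have "msum (d+v) (map (\<lambda>M. adj M * M) perturbed_kraus) \<in> carrier_mat (d+v) (d+v)"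
    by (intro msum_carrier) (auto intro: adj_mult_self_carrier[OF mat_lincomb_carrier])
  ultimately have "msum (d+v) (map (\<lambda>M. adj M * M) perturbed_kraus) = 1\<^sub>m (d+v)"
    by (intro eq_matI) (auto dest: carrier_matD)
  then show ?thesis
    by (simp add: kraus_rep_def kraus_map_def)
qed

lemma perturbed_no_leakage:
  assumes "X \<in> perturbations" "hermitian_coeffs X"
  shows "no_leakage d v (kraus_map (d+v) perturbed_kraus)"
proof -
  note kraus' = perturbed_kraus_rep[OF assms]
  have "\<forall>M\<in>set perturbed_kraus. coord_invariant (\<lambda>i. i < d) M \<and> coord_invariant (\<lambda>i. d \<le> i) M"
    using kraus_carrier kraus_coord_invariant by (auto intro!: coord_invariant_mat_lincomb)
  then show ?thesis
    by (simp add: no_leakage_iff_preserves_support[OF kraus_rep_carrier[OF kraus']]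
        preserves_support_iff_coord_invariant[OF kraus'])
qed

lemma perturbed_restriction:
  assumes "X \<in> perturbations" "\<rho> \<in> carrier_mat d d"
  shows "blockA d (kraus_map (d+v) perturbed_kraus (embedA d v \<rho>)) = blockA d (E (embedA d v \<rho>))"
proof (rule eq_matI)
  fix a b
  assume "a < dim_row (blockA d (E (embedA d v \<rho>)))" "b < dim_col (blockA d (E (embedA d v \<rho>)))"
  then have ab: "a < d" "b < d"
    by (auto simp: blockA_def)
  have "X i j * (Ks ! i * embedA d v \<rho> * adj (Ks ! j)) $$ (a,b) = 0" for i j
  proof (cases "X i j = 0")
    case False
    then have ij: "i < length Ks" "j < length Ks" "i \<in> zero_blocks \<or> j \<in> zero_blocks"
      using assms(1) by (auto simp: perturbations_def)
    have "(Ks ! i * embedA d v \<rho> * adj (Ks ! j)) $$ (a,b)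
        = (\<Sum>c<d+v. \<Sum>e<d+v. Ks ! i $$ (a,c) * embedA d v \<rho> $$ (c,e) * cnj (Ks ! j $$ (b,e)))"
      by (rule index_sandwich[where n = "d+v" and n' = "d+v"]) (use ij ab kraus_rep_nth_carrier[OF kraus] in auto)
    also have "\<dots> = 0"
      using ij ab zero_blocks_entry by (intro sum.neutral ballI) (auto simp: embedA_def)
    finally show ?thesis
      by simp
  qed simp
  then show "blockA d (kraus_map (d+v) perturbed_kraus (embedA d v \<rho>)) $$ (a,b) = blockA d (E (embedA d v \<rho>)) $$ (a,b)"
    using ab by (simp add: blockA_def index_perturbed_kraus_map del: mult_eq_0_iff)
qed (simp_all add: blockA_def)

lemma perturbed_vacuum_extension:
  assumes "X \<in> perturbations" "hermitian_coeffs X"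
  shows "vacuum_extension d v C (kraus_map (d+v) perturbed_kraus)"
  using vacuum_ext perturbed_kraus_rep[OF assms] perturbed_no_leakage[OF assms] perturbed_restriction[OF assms(1)]
  by (auto simp: vacuum_extension_iff is_channel_def)

end

lemma exists_perturbed_extension:
  assumes "X \<in> perturbations" "hermitian_coeffs X"
    and small: "\<And>p. p < length Ks \<Longrightarrow> (\<Sum>q<length Ks. cmod (X p q)) \<le> 1"
  shows "\<exists>E'. vacuum_extension d v C E' \<and>
    (\<forall>\<rho>\<in>carrier_mat (d+v) (d+v). \<forall>a<d+v. \<forall>b<d+v. E' \<rho> $$ (a,b)
       = E \<rho> $$ (a,b) + (\<Sum>i<length Ks. \<Sum>j<length Ks. X i j * (Ks ! i * \<rho> * adj (Ks ! j)) $$ (a,b)))"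
proof -
  let ?A = "\<lambda>i j. of_bool (i = j) + X i j"
  have A_herm: "hermitian_coeffs ?A"
    using hermitian_coeffs_cnj[OF assms(2)] by (auto simp: hermitian_coeffs_def)
  have A_dominant: "(\<Sum>q\<in>{..<length Ks}-{p}. cmod (?A p q)) \<le> Re (?A p p)" if "p < length Ks" for p
  proof -
    have "(\<Sum>q\<in>{..<length Ks}-{p}. cmod (?A p q)) = (\<Sum>q<length Ks. cmod (X p q)) - cmod (X p p)"
      using that by (simp add: sum_diff1)
    also have "\<dots> \<le> 1 + Re (X p p)"
      using small[OF that] abs_Re_le_cmod[of "X p p"] by linarith
    finally show ?thesis
      by simp
  qed
  obtain L :: nat and g where "\<forall>p<length Ks. \<forall>q<length Ks. ?A p q = (\<Sum>k<L. g k p * cnj (g k q))"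
    using diag_dominant_gram[OF A_herm A_dominant] by blast
  then have gram: "(\<Sum>k<L. g k i * cnj (g k j)) = of_bool (i = j) + X i j"
    if "i < length Ks" "j < length Ks" for i j
    using that by simp
  show ?thesis
  proof (intro exI conjI ballI allI impI)
    show "vacuum_extension d v C (kraus_map (d+v) (map (\<lambda>k. mat_lincomb (d+v) Ks (g k)) [0..<L]))"
      by (rule perturbed_vacuum_extension[OF gram assms(1,2)])
    fix \<rho> :: "complex mat" and a b :: nat
    assume "\<rho> \<in> carrier_mat (d+v) (d+v)" "a < d+v" "b < d+v"
    then show "kraus_map (d+v) (map (\<lambda>k. mat_lincomb (d+v) Ks (g k)) [0..<L]) \<rho> $$ (a,b)
      = E \<rho> $$ (a,b) + (\<Sum>i<length Ks. \<Sum>j<length Ks. X i j * (Ks ! i * \<rho> * adj (Ks ! j)) $$ (a,b))"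
      using index_perturbed_kraus_map[OF gram] by blast
  qed
qed

lemma extreme_perturbation_vanishes:
  assumes extreme: "extreme_map (d+v) {E'. vacuum_extension d v C E'} E"
    and X: "X \<in> perturbations" "hermitian_coeffs X"
    and small: "\<And>p. p < length Ks \<Longrightarrow> (\<Sum>q<length Ks. cmod (X p q)) \<le> 1"
    and \<rho>: "\<rho> \<in> carrier_mat (d+v) (d+v)" and "a < d+v" "b < d+v"
  shows "(\<Sum>i<length Ks. \<Sum>j<length Ks. X i j * (Ks ! i * \<rho> * adj (Ks ! j)) $$ (a,b)) = 0"
proof -
  let ?S = "\<lambda>X \<rho> a b. \<Sum>i<length Ks. \<Sum>j<length Ks. X i j * (Ks ! i * \<rho> * adj (Ks ! j)) $$ (a,b)"
  have neg: "(\<lambda>i j. - X i j) \<in> perturbations" "hermitian_coeffs (\<lambda>i j. - X i j)"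
    "\<And>p. p < length Ks \<Longrightarrow> (\<Sum>q<length Ks. cmod (- X p q)) \<le> 1"
    using perturbations_scale[OF X(1), of "- 1"] hermitian_coeffs_cnj[OF X(2)] small
    by (simp_all add: hermitian_coeffs_def)
  obtain E1 where E1: "vacuum_extension d v C E1"
    "\<forall>\<rho>\<in>carrier_mat (d+v) (d+v). \<forall>a<d+v. \<forall>b<d+v. E1 \<rho> $$ (a,b) = E \<rho> $$ (a,b) + ?S X \<rho> a b"
    using exists_perturbed_extension[OF X small] by blast
  obtain E2 where E2: "vacuum_extension d v C E2"
    "\<forall>\<rho>\<in>carrier_mat (d+v) (d+v). \<forall>a<d+v. \<forall>b<d+v. E2 \<rho> $$ (a,b) = E \<rho> $$ (a,b) + ?S (\<lambda>i j. - X i j) \<rho> a b"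
    using exists_perturbed_extension[OF neg] by blast
  have "E1 \<rho> = E \<rho>"
  proof (rule extreme_map_midpoint[OF extreme _ _ _ _ \<rho>])
    show "E1 \<in> {E'. vacuum_extension d v C E'}" "E2 \<in> {E'. vacuum_extension d v C E'}"
      using E1(1) E2(1) by simp_all
    fix \<rho>' :: "complex mat" assume "\<rho>' \<in> carrier_mat (d+v) (d+v)"
    then show "E \<rho>' \<in> carrier_mat (d+v) (d+v) \<and> E1 \<rho>' \<in> carrier_mat (d+v) (d+v) \<and> E2 \<rho>' \<in> carrier_mat (d+v) (d+v)"
      using vacuum_extension_carrier vacuum_ext E1(1) E2(1) by blast
    fix a' b' assume "a' < d+v" "b' < d+v"
    then show "E1 \<rho>' $$ (a',b') + E2 \<rho>' $$ (a',b') = 2 * E \<rho>' $$ (a',b')"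
      using E1(2) E2(2) \<open>\<rho>' \<in> carrier_mat (d+v) (d+v)\<close> by (simp add: sum_negf)
  qed
  moreover have "E1 \<rho> $$ (a,b) = E \<rho> $$ (a,b) + ?S X \<rho> a b"
    using E1(2) \<rho> \<open>a < d+v\<close> \<open>b < d+v\<close> by blast
  ultimately show ?thesis
    by simp
qed

lemma extreme_perturbation_eq_0:
  assumes extreme: "extreme_map (d+v) {E'. vacuum_extension d v C E'} E"
    and indep: "lin_indep_mats (d+v) Ks"
    and X: "X \<in> perturbations" "hermitian_coeffs X"
  shows "X i j = 0"
proof -
  define t where "t = 1 + (\<Sum>p<length Ks. \<Sum>q<length Ks. cmod (X p q))"
  have "t \<ge> 1"
    by (simp add: t_def sum_nonneg)
  define Y where "Y p q = complex_of_real (1 / t) * X p q" for p q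
  have "Y \<in> perturbations"
    unfolding Y_def[abs_def] by (rule perturbations_scale[OF X(1)])
  moreover have "hermitian_coeffs Y"
    by (simp add: Y_def hermitian_coeffs_def hermitian_coeffs_cnj[OF X(2)])
  ultimately have Y: "Y \<in> perturbations" "hermitian_coeffs Y" .
  have small: "(\<Sum>q<length Ks. cmod (Y p q)) \<le> 1" if "p < length Ks" for p
  proof -
    have "(\<Sum>q<length Ks. cmod (X p q)) \<le> (\<Sum>p<length Ks. \<Sum>q<length Ks. cmod (X p q))"
      using that by (intro member_le_sum) (auto intro: sum_nonneg)
    then have "(\<Sum>q<length Ks. cmod (X p q)) \<le> t"
      by (simp add: t_def)
    moreover have "(\<Sum>q<length Ks. cmod (Y p q)) = (\<Sum>q<length Ks. cmod (X p q)) / t"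
      using \<open>t \<ge> 1\<close> by (simp add: Y_def norm_divide sum_divide_distrib)
    ultimately show ?thesis
      using \<open>t \<ge> 1\<close> by simp
  qed
  have Y_zero: "Y i j = 0" if "i < length Ks" "j < length Ks" for i j
  proof (rule lin_indep_mats_sandwich_coeffs_zero[OF indep kraus_carrier _ that])
    fix \<rho> :: "complex mat" and a b :: nat
    assume "\<rho> \<in> carrier_mat (d+v) (d+v)" "a < d+v" "b < d+v"
    then show "(\<Sum>i<length Ks. \<Sum>j<length Ks. Y i j * (Ks ! i * \<rho> * adj (Ks ! j)) $$ (a,b)) = 0"
      by (simp add: extreme_perturbation_vanishes[OF extreme Y small])
  qed
  show ?thesis
  proof (cases "i < length Ks \<and> j < length Ks")
    case True
    then show ?thesis
      using Y_zero[of i j] \<open>t \<ge> 1\<close> by (simp add: Y_def)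
  next
    case False
    then show ?thesis
      using X(1) unfolding perturbations_def by blast
  qed
qed

lemma exists_perturbation_on_pairs:
  assumes U: "finite U" "v * v < card U"
    and U_touches: "\<And>i j. (i,j) \<in> U \<Longrightarrow> i < length Ks \<and> j < length Ks \<and> (i \<in> zero_blocks \<or> j \<in> zero_blocks)"
  shows "\<exists>Y\<in>perturbations. \<exists>i j. Y i j \<noteq> 0"
proof -
  define Vac where "Vac = {d..<d+v} \<times> {d..<d+v}"
  have "finite Vac" "card Vac < card U"
    using U by (simp_all add: Vac_def card_cartesian_product)
  then obtain y where y: "\<exists>u\<in>U. y u \<noteq> 0"
    and y_kernel: "\<forall>e\<in>Vac. (\<Sum>u\<in>U. (adj (Ks ! snd u) * Ks ! fst u) $$ e * y u) = 0"
    using homogeneous_system_nontrivial_solution[where coeff = "\<lambda>e u. (adj (Ks ! snd u) * Ks ! fst u) $$ e",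
        OF U(1)] by blast
  define Y where "Y i j = (if (i,j) \<in> U then y (i,j) else 0)" for i j
  have "Y \<in> perturbations"
    unfolding perturbations_def mem_Collect_eq
  proof (intro conjI allI impI)
    fix i j assume "Y i j \<noteq> 0"
    then show "i < length Ks" "j < length Ks" "i \<in> zero_blocks \<or> j \<in> zero_blocks"
      using U_touches by (auto simp: Y_def split: if_splits)
  next
    fix p q assume "d \<le> p" "p < d+v" "d \<le> q" "q < d+v"
    have "(\<Sum>i<length Ks. \<Sum>j<length Ks. Y i j * (adj (Ks ! j) * Ks ! i) $$ (p,q))
        = (\<Sum>u\<in>{..<length Ks} \<times> {..<length Ks}. Y (fst u) (snd u) * (adj (Ks ! snd u) * Ks ! fst u) $$ (p,q))"
      by (simp add: sum.cartesian_product case_prod_beta)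
    also have "\<dots> = (\<Sum>u\<in>U. (adj (Ks ! snd u) * Ks ! fst u) $$ (p,q) * y u)"
      using U_touches U(1) by (intro sum.mono_neutral_cong_right) (auto simp: Y_def)
    also have "\<dots> = 0"
      using y_kernel \<open>d \<le> p\<close> \<open>p < d+v\<close> \<open>d \<le> q\<close> \<open>q < d+v\<close> by (simp add: Vac_def)
    finally show "(\<Sum>i<length Ks. \<Sum>j<length Ks. Y i j * (adj (Ks ! j) * Ks ! i) $$ (p,q)) = 0" .
  qed
  moreover have "\<exists>i j. Y i j \<noteq> 0"
    using y by (force simp: Y_def)
  ultimately show ?thesis
    by blast
qed

lemma exists_nonzero_perturbation:
  assumes j0: "j0 < length Ks" "j0 \<notin> zero_blocks"
    and many: "v * v < card zero_blocks * card zero_blocks + 2 * card zero_blocks"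
  shows "\<exists>X\<in>perturbations. hermitian_coeffs X \<and> (\<exists>i j. X i j \<noteq> 0)"
proof -
  define S where "S = insert j0 zero_blocks"
  have S: "finite S" "card S = card zero_blocks + 1" "(j0,j0) \<in> S \<times> S"
    using j0 finite_zero_blocks by (simp_all add: S_def)
  then have "v * v < card (S \<times> S - {(j0,j0)})"
    using many by (simp add: card_Diff_singleton card_cartesian_product)
  moreover have "i < length Ks \<and> j < length Ks \<and> (i \<in> zero_blocks \<or> j \<in> zero_blocks)"
    if "(i,j) \<in> S \<times> S - {(j0,j0)}" for i j
    using that j0 by (auto simp: S_def zero_blocks_def)
  ultimately have "\<exists>Y\<in>perturbations. \<exists>i j. Y i j \<noteq> 0"
    using S(1) by (intro exists_perturbation_on_pairs) auto
  then obtain Y a b where "Y \<in> perturbations" "Y a b \<noteq> 0"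
    by blast
  then show ?thesis
    using exists_hermitian_nonzero[of Y perturbations a b] perturbations_adj perturbations_add perturbations_scale
    by blast
qed

end

lemma le_sqrt_sq_plus_one_minus_one:
  fixes z v :: nat
  assumes "z * z + 2 * z \<le> v * v"
  shows "real z \<le> sqrt (real v ^ 2 + 1) - 1"
proof -
  have "(real z + 1)\<^sup>2 \<le> real v ^ 2 + 1"
    using assms by (simp add: power2_eq_square algebra_simps flip: of_nat_mult of_nat_add)
  then show ?thesis
    using real_le_rsqrt by fastforce
qed

theorem proposition5:
  fixes d v :: nat
    and C E :: "complex mat \<Rightarrow> complex mat"
    and Ks :: "complex mat list"
  assumes "0 < d"
    and "is_channel d C"
    and "1 \<le> v"
    and "vacuum_extension d v C E"
    and "kraus_rep (d+v) Ks E"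
    and "lin_indep_mats (d+v) Ks"
    and "extreme_map (d+v) {E'. vacuum_extension d v C E'} E"
  shows "real (card {i. i < length Ks \<and> blockA d (Ks ! i) = 0\<^sub>m d d}) \<le> sqrt (real v ^ 2 + 1) - 1
         \<and> (v = 1 \<longrightarrow> (\<forall>i < length Ks. blockA d (Ks ! i) \<noteq> 0\<^sub>m d d))"
proof -
  interpret vacuum_kraus d v C E Ks
    using assms(4,5) by unfold_locales
  obtain j0 where j0: "j0 < length Ks" "j0 \<notin> zero_blocks"
    using exists_nonzero_blockA[OF assms(1)] by blast
  have bound: "card zero_blocks * card zero_blocks + 2 * card zero_blocks \<le> v * v"
  proof (rule ccontr)
    assume "\<not> ?thesis"
    then obtain X i j where "X \<in> perturbations" "hermitian_coeffs X" "X i j \<noteq> 0"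
      using exists_nonzero_perturbation[OF j0] by auto
    then show False
      using extreme_perturbation_eq_0[OF assms(7,6)] by blast
  qed
  then have "v = 1 \<longrightarrow> zero_blocks = {}"
    using finite_zero_blocks by (cases "card zero_blocks") auto
  then show ?thesis
    using le_sqrt_sq_plus_one_minus_one[OF bound] by (auto simp: zero_blocks_def)
qed

end
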